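(* Let $\mathbb{T}\colon\mathbb{R}^d\to\mathbb{R}^d$ be nonexpansive and let $y_\star\in\mathrm{Fix}\,\mathbb{T}$. Let $N\ge 1$ be an integer, let $y_0\in\mathbb{R}^d$, set $\mathbb{T}y_{-1}:=y_0$, and define \[ y_{k+1} = y_k + \frac{N-k-1}{N-k}\left(\mathbb{T}y_k - \mathbb{T}y_{k-1}\right), \qquad k=0,1,\dots,N-2 \] (the Dual Optimal Halpern Method, Dual-OHM). Then \[ \|y_{N-1} - \mathbb{T}y_{N-1}\|^2 \le \frac{4\|y_0 - y_\star\|^2}{N^2}. \]
   Context: $\mathbb{T}$ is nonexpansive if $\|\mathbb{T}x-\mathbb{T}y\|\le\|x-y\|$ for all $x,y$. $\mathrm{Fix}\,\mathbb{T}=\{y:\ y=\mathbb{T}y\}$. *)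

theory Defs
  imports "HOL-Analysis.Analysis"
begin

definition nonexpansive :: "('a::real_normed_vector \<Rightarrow> 'a) \<Rightarrow> bool" where
  "nonexpansive T \<longleftrightarrow> (\<forall>x y. norm (T x - T y) \<le> norm (x - y))"

definition Fix :: "('a \<Rightarrow> 'a) \<Rightarrow> 'a set" where
  "Fix T = {y. y = T y}"

text \<open>Dual-OHM iterates. The convention T y_{-1} := y0 is built into the step
  for k = 0: y_1 = y_0 + (N-1)/N (T y_0 - y_0). For k \<ge> 1,
  y_{k+1} = y_k + (N-k-1)/(N-k) (T y_k - T y_{k-1}).\<close>
fun dual_ohm :: "('a::real_normed_vector \<Rightarrow> 'a) \<Rightarrow> nat \<Rightarrow> 'a \<Rightarrow> nat \<Rightarrow> 'a" where
  "dual_ohm T N y0 0 = y0"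
| "dual_ohm T N y0 (Suc 0) =
     y0 + ((real N - 1) / real N) *\<^sub>R (T y0 - y0)"
| "dual_ohm T N y0 (Suc (Suc k)) =
     dual_ohm T N y0 (Suc k)
     + ((real N - real (Suc k) - 1) / (real N - real (Suc k))) *\<^sub>R
         (T (dual_ohm T N y0 (Suc k)) - T (dual_ohm T N y0 k))"

end

theory Submission
  imports Defs
begin

text \<open>Let \<open>p\<^sub>m = T y\<^sub>m\<^sub>-\<^sub>1\<close> (so \<open>p\<^sub>0 = y\<^sub>0\<close>). For any point \<open>x\<close> the potential
  \<open>V\<^sub>m = (\<parallel>x - y\<^sub>m\<parallel>\<^sup>2 - \<parallel>T x - p\<^sub>m\<parallel>\<^sup>2) / (N - m) + \<parallel>(y\<^sub>m - p\<^sub>m) - (x - T x)\<parallel>\<^sup>2\<close>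
  is nondecreasing in \<open>m < N\<close>, each step adding a nonnegative multiple of
  \<open>\<parallel>x - y\<^sub>m\<parallel>\<^sup>2 - \<parallel>T x - T y\<^sub>m\<parallel>\<^sup>2\<close>. For \<open>x = y\<^sub>N\<^sub>-\<^sub>1\<close> it vanishes at \<open>m = N - 1\<close>, so
  \<open>V\<^sub>0 \<le> 0\<close>, which reads \<open>N \<parallel>x - T x\<parallel>\<^sup>2 \<le> \<parallel>T x - y\<^sub>0\<parallel>\<^sup>2 - \<parallel>x - y\<^sub>0\<parallel>\<^sup>2\<close>. Together with
  \<open>\<parallel>T x - y\<^sub>\<star>\<parallel> \<le> \<parallel>x - y\<^sub>\<star>\<parallel>\<close> and Cauchy-Schwarz this gives \<open>N \<parallel>x - T x\<parallel> \<le> 2 \<parallel>y\<^sub>0 - y\<^sub>\<star>\<parallel>\<close>.\<close>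

lemma nonexpansiveD: "nonexpansive T \<Longrightarrow> norm (T x - T y) \<le> norm (x - y)"
  unfolding nonexpansive_def by blast

lemma FixD: "y \<in> Fix T \<Longrightarrow> T y = y"
  unfolding Fix_def by simp

definition dual_ohm_prev :: "('a::real_normed_vector \<Rightarrow> 'a) \<Rightarrow> nat \<Rightarrow> 'a \<Rightarrow> nat \<Rightarrow> 'a" where
  "dual_ohm_prev T N y0 k = (if k = 0 then y0 else T (dual_ohm T N y0 (k - 1)))"

lemma dual_ohm_Suc:
  "dual_ohm T N y0 (Suc k) = dual_ohm T N y0 k
     + ((real N - real k - 1) / (real N - real k)) *\<^sub>R (T (dual_ohm T N y0 k) - dual_ohm_prev T N y0 k)"
  by (cases k) (simp_all add: dual_ohm_prev_def)

lemma potential_step_identity: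
  fixes a b d :: "'a::real_inner" and h :: real
  assumes "h > 1"
  shows "((norm (a - ((h - 1) / h) *\<^sub>R d))\<^sup>2 - (norm (b - d))\<^sup>2) / (h - 1)
           + (norm (b - a - (1 / h) *\<^sub>R d))\<^sup>2
         = ((norm a)\<^sup>2 - (norm b)\<^sup>2) / h + (norm (b - a))\<^sup>2
           + ((norm a)\<^sup>2 - (norm (b - d))\<^sup>2) / (h * (h - 1))"
proof -
  have "h \<noteq> 0" "h - 1 \<noteq> 0" using assms by auto
  then show ?thesis
    unfolding power2_norm_eq_inner
    by (simp only: inner_diff_left inner_diff_right inner_scaleR_left inner_scaleR_right
        inner_commute[of d a] inner_commute[of d b] inner_commute[of b a]) (simp add: field_simps)
qed

definition dual_ohm_potential :: "('a::real_normed_vector \<Rightarrow> 'a) \<Rightarrow> nat \<Rightarrow> 'a \<Rightarrow> 'a \<Rightarrow> nat \<Rightarrow> real" where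
  "dual_ohm_potential T N y0 x m =
     ((norm (x - dual_ohm T N y0 m))\<^sup>2 - (norm (T x - dual_ohm_prev T N y0 m))\<^sup>2) / (real N - real m)
     + (norm ((dual_ohm T N y0 m - dual_ohm_prev T N y0 m) - (x - T x)))\<^sup>2"

lemma dual_ohm_potential_Suc:
  fixes T :: "'a::real_inner \<Rightarrow> 'a"
  assumes "Suc m < N"
  shows "dual_ohm_potential T N y0 x (Suc m) = dual_ohm_potential T N y0 x m
    + ((norm (x - dual_ohm T N y0 m))\<^sup>2 - (norm (T x - T (dual_ohm T N y0 m)))\<^sup>2)
        / ((real N - real m) * (real N - real m - 1))"
proof -
  define h where "h = real N - real m"
  define a where "a = x - dual_ohm T N y0 m"
  define b where "b = T x - dual_ohm_prev T N y0 m"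
  define d where "d = T (dual_ohm T N y0 m) - dual_ohm_prev T N y0 m"
  have "h > 1" using assms by (simp add: h_def)
  have y_Suc: "dual_ohm T N y0 (Suc m) = dual_ohm T N y0 m + ((h - 1) / h) *\<^sub>R d"
    by (simp add: dual_ohm_Suc h_def d_def)
  have "(1 / h) *\<^sub>R d = d - ((h - 1) / h) *\<^sub>R d"
    using \<open>h > 1\<close> by (simp add: diff_divide_distrib scaleR_diff_left)
  then have diff_Suc: "(dual_ohm T N y0 (Suc m) - dual_ohm_prev T N y0 (Suc m)) - (x - T x)
      = b - a - (1 / h) *\<^sub>R d"
    by (simp add: y_Suc dual_ohm_prev_def a_def b_def d_def algebra_simps)
  have "dual_ohm_potential T N y0 x (Suc m)
      = ((norm (a - ((h - 1) / h) *\<^sub>R d))\<^sup>2 - (norm (b - d))\<^sup>2) / (h - 1)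
        + (norm (b - a - (1 / h) *\<^sub>R d))\<^sup>2"
  proof -
    have "x - dual_ohm T N y0 (Suc m) = a - ((h - 1) / h) *\<^sub>R d"
      by (simp add: y_Suc a_def)
    moreover have "T x - dual_ohm_prev T N y0 (Suc m) = b - d"
      by (simp add: dual_ohm_prev_def b_def d_def)
    moreover have "real N - real (Suc m) = h - 1"
      by (simp add: h_def)
    ultimately show ?thesis
      unfolding dual_ohm_potential_def diff_Suc by simp
  qed
  also have "\<dots> = ((norm a)\<^sup>2 - (norm b)\<^sup>2) / h + (norm (b - a))\<^sup>2
      + ((norm a)\<^sup>2 - (norm (b - d))\<^sup>2) / (h * (h - 1))"
    using \<open>h > 1\<close> by (rule potential_step_identity)
  also have "\<dots> = dual_ohm_potential T N y0 x m
      + ((norm (x - dual_ohm T N y0 m))\<^sup>2 - (norm (T x - T (dual_ohm T N y0 m)))\<^sup>2)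
        / ((real N - real m) * (real N - real m - 1))"
    unfolding dual_ohm_potential_def by (simp add: a_def b_def d_def h_def algebra_simps)
  finally show ?thesis .
qed

lemma dual_ohm_potential_mono:
  fixes T :: "'a::real_inner \<Rightarrow> 'a"
  assumes "nonexpansive T" and "m < N"
  shows "dual_ohm_potential T N y0 x 0 \<le> dual_ohm_potential T N y0 x m"
  using \<open>m < N\<close>
proof (induction m)
  case 0
  show ?case by simp
next
  case (Suc m)
  have "norm (T x - T (dual_ohm T N y0 m)) \<le> norm (x - dual_ohm T N y0 m)"
    using \<open>nonexpansive T\<close> by (rule nonexpansiveD)
  then have "0 \<le> ((norm (x - dual_ohm T N y0 m))\<^sup>2 - (norm (T x - T (dual_ohm T N y0 m)))\<^sup>2)
      / ((real N - real m) * (real N - real m - 1))"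
    using Suc.prems by (intro divide_nonneg_pos) (simp_all add: power_mono)
  with Suc show ?case
    by (simp add: dual_ohm_potential_Suc)
qed

lemma dual_ohm_potential_0:
  "dual_ohm_potential T N y0 x 0
     = ((norm (x - y0))\<^sup>2 - (norm (T x - y0))\<^sup>2) / real N + (norm (x - T x))\<^sup>2"
  by (simp add: dual_ohm_potential_def dual_ohm_prev_def norm_minus_commute)

lemma dual_ohm_potential_last:
  assumes "N \<ge> 1"
  shows "dual_ohm_potential T N y0 (dual_ohm T N y0 (N - 1)) (N - 1) = 0"
proof -
  have "real N - real (N - 1) = 1" using assms by simp
  then show ?thesis
    by (simp add: dual_ohm_potential_def norm_minus_commute)
qed

lemma dual_ohm_anchor_inequality:
  fixes T :: "'a::real_inner \<Rightarrow> 'a"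
  assumes "nonexpansive T" and "N \<ge> 1" and "x = dual_ohm T N y0 (N - 1)"
  shows "real N * (norm (x - T x))\<^sup>2 \<le> (norm (T x - y0))\<^sup>2 - (norm (x - y0))\<^sup>2"
proof -
  have "dual_ohm_potential T N y0 x 0 \<le> dual_ohm_potential T N y0 x (N - 1)"
    using assms(2) by (intro dual_ohm_potential_mono[OF assms(1)]) simp
  also have "\<dots> = 0"
    unfolding assms(3) using assms(2) by (rule dual_ohm_potential_last)
  finally have "((norm (x - y0))\<^sup>2 - (norm (T x - y0))\<^sup>2) / real N + (norm (x - T x))\<^sup>2 \<le> 0"
    by (simp add: dual_ohm_potential_0)
  with \<open>N \<ge> 1\<close> show ?thesis
    by (simp add: field_simps)
qed

lemma residual_bound_of_anchor_inequality:
  fixes x u y0 z :: "'a::real_inner" and c :: real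
  assumes "c > 0"
    and "norm (u - z) \<le> norm (x - z)"
    and "c * (norm (x - u))\<^sup>2 \<le> (norm (u - y0))\<^sup>2 - (norm (x - y0))\<^sup>2"
  shows "(norm (x - u))\<^sup>2 \<le> 4 * (norm (y0 - z))\<^sup>2 / c\<^sup>2"
proof -
  define g where "g = x - u"
  have "(norm (u - z))\<^sup>2 \<le> (norm (x - z))\<^sup>2"
    using assms(2) by (simp add: power_mono)
  then have "(norm g)\<^sup>2 \<le> 2 * ((x - z) \<bullet> g)"
    by (simp add: dot_norm_neg g_def)
  moreover have "(norm (u - y0))\<^sup>2 - (norm (x - y0))\<^sup>2 = (norm g)\<^sup>2 - 2 * ((x - y0) \<bullet> g)"
    by (simp add: dot_norm_neg g_def field_simps)
  ultimately have "c * (norm g)\<^sup>2 \<le> 2 * ((x - z) \<bullet> g) - 2 * ((x - y0) \<bullet> g)"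
    using assms(3) unfolding g_def by linarith
  also have "\<dots> = 2 * ((y0 - z) \<bullet> g)"
    by (simp add: inner_diff_left algebra_simps)
  also have "\<dots> \<le> 2 * (norm (y0 - z) * norm g)"
    by (simp add: norm_cauchy_schwarz)
  finally have "(c * norm g) * norm g \<le> (2 * norm (y0 - z)) * norm g"
    by (simp add: power2_eq_square mult.assoc)
  then have "c * norm g \<le> 2 * norm (y0 - z)"
  proof (cases "norm g = 0")
    case False
    then show ?thesis
      using \<open>(c * norm g) * norm g \<le> (2 * norm (y0 - z)) * norm g\<close>
      by (simp add: mult_right_le_imp_le)
  qed simp
  then have "(c * norm g)\<^sup>2 \<le> (2 * norm (y0 - z))\<^sup>2"
    using assms(1) by (intro power_mono) simp_all
  with assms(1) show ?thesis
    unfolding g_def by (simp add: power_mult_distrib pos_le_divide_eq mult.commute)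
qed

theorem theorem3p3:
  fixes T :: "real ^ 'd \<Rightarrow> real ^ 'd" and y0 ystar :: "real ^ 'd" and N :: nat
  assumes "nonexpansive T"
    and "ystar \<in> Fix T"
    and "N \<ge> 1"
  shows "(norm (dual_ohm T N y0 (N - 1) - T (dual_ohm T N y0 (N - 1))))\<^sup>2
           \<le> 4 * (norm (y0 - ystar))\<^sup>2 / (real N)\<^sup>2"
proof -
  define x where "x = dual_ohm T N y0 (N - 1)"
  have "norm (T x - ystar) \<le> norm (x - ystar)"
    using nonexpansiveD[OF assms(1), of x ystar] FixD[OF assms(2)] by simp
  moreover have "real N * (norm (x - T x))\<^sup>2 \<le> (norm (T x - y0))\<^sup>2 - (norm (x - y0))\<^sup>2"
    using assms(1,3) x_def by (rule dual_ohm_anchor_inequality)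
  ultimately have "(norm (x - T x))\<^sup>2 \<le> 4 * (norm (y0 - ystar))\<^sup>2 / (real N)\<^sup>2"
    using assms(3) by (intro residual_bound_of_anchor_inequality) simp_all
  then show ?thesis
    unfolding x_def .
qed

end
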